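(* Let $(Y,\preceq,\prec,\to)$ be a solid vector space. Then (C6) each convergent sequence in $Y$ has a unique limit, and (C7) each convergent sequence $(x_n)$ in $Y$ is bounded, i.e. there exist $a,b\in Y$ with $a\preceq x_n\preceq b$ for all $n$.
   Context: Vector space with convergence: a real vector space $Y$ with a relation $\to$ between sequences in $Y$ and points of $Y$ (write $x_n\to x$, $x$ "a limit"; uniqueness not assumed a priori) such that (C1) $x_n\to x$, $y_n\to y$ imply $x_n+y_n\to x+y$; (C2) $x_n\to x$, $\lambda\in\mathbb R$ imply $\lambda x_n\to\lambda x$; (C3) $\lambda_n\to\lambda$ in $\mathbb R$ imply $\lambda_n x\to\lambda x$. $A\subseteq Y$ is open if $x_n\to x\in A$ implies $x_n\in A$ for all but finitely many $n$; closed if $x_n\to x$, $x_n\in A$ $\forall n$ imply $x\in A$; $A^\circ$ is the union of all open subsets of $A$. A cone is a nonempty closed $K$ with $\lambda K\subseteq K$ ($\lambda\ge0$), $K+K\subseteq K$, $K\cap(-K)=\{0\}$; solid if $K\ne\{0\}$, $K^\circ\ne\emptyset$. A vector ordering is a partial order $\preceq$ with (V1) $x\preceq y\Rightarrow x+z\preceq y+z$; (V2) $\lambda\ge0$, $x\preceq y\Rightarrow\lambda x\preceq\lambda y$; (V3) $x_n\to x$, $y_n\to y$, $x_n\preceq y_n$ $\forall n\Rightarrow x\preceq y$. Solid vector space: positive cone $K=\{x:x\succeq0\}$ solid, with $x\prec y$ iff $y-x\in K^\circ$. *)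

theory Defs
  imports Complex_Main
begin

text \<open>A vector space with convergence: the carrier is a real vector space type 'a,
  and conv X x means X converges to x (limits not assumed unique).\<close>

definition vs_convergence :: "((nat \<Rightarrow> 'a::real_vector) \<Rightarrow> 'a \<Rightarrow> bool) \<Rightarrow> bool" where
  "vs_convergence conv \<longleftrightarrow>
     (\<forall>X Y x y. conv X x \<and> conv Y y \<longrightarrow> conv (\<lambda>n. X n + Y n) (x + y)) \<and>
     (\<forall>X x (c::real). conv X x \<longrightarrow> conv (\<lambda>n. c *\<^sub>R X n) (c *\<^sub>R x)) \<and>
     (\<forall>(L::nat \<Rightarrow> real) l x. L \<longlonglongrightarrow> l \<longrightarrow> conv (\<lambda>n. L n *\<^sub>R x) (l *\<^sub>R x))"

definition conv_open :: "((nat \<Rightarrow> 'a) \<Rightarrow> 'a \<Rightarrow> bool) \<Rightarrow> 'a set \<Rightarrow> bool" where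
  "conv_open conv A \<longleftrightarrow>
     (\<forall>X x. conv X x \<and> x \<in> A \<longrightarrow> finite {n. X n \<notin> A})"

definition conv_closed :: "((nat \<Rightarrow> 'a) \<Rightarrow> 'a \<Rightarrow> bool) \<Rightarrow> 'a set \<Rightarrow> bool" where
  "conv_closed conv A \<longleftrightarrow> (\<forall>X x. conv X x \<and> (\<forall>n. X n \<in> A) \<longrightarrow> x \<in> A)"

definition conv_interior :: "((nat \<Rightarrow> 'a) \<Rightarrow> 'a \<Rightarrow> bool) \<Rightarrow> 'a set \<Rightarrow> 'a set" where
  "conv_interior conv A = \<Union>{U. U \<subseteq> A \<and> conv_open conv U}"

definition conv_cone :: "((nat \<Rightarrow> 'a::real_vector) \<Rightarrow> 'a \<Rightarrow> bool) \<Rightarrow> 'a set \<Rightarrow> bool" where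
  "conv_cone conv K \<longleftrightarrow> K \<noteq> {} \<and> conv_closed conv K \<and>
     (\<forall>(c::real) x. c \<ge> 0 \<and> x \<in> K \<longrightarrow> c *\<^sub>R x \<in> K) \<and>
     (\<forall>x y. x \<in> K \<and> y \<in> K \<longrightarrow> x + y \<in> K) \<and>
     K \<inter> uminus ` K = {0}"

definition solid_cone :: "((nat \<Rightarrow> 'a::real_vector) \<Rightarrow> 'a \<Rightarrow> bool) \<Rightarrow> 'a set \<Rightarrow> bool" where
  "solid_cone conv K \<longleftrightarrow> conv_cone conv K \<and> K \<noteq> {0} \<and> conv_interior conv K \<noteq> {}"

definition vector_ordering ::
  "((nat \<Rightarrow> 'a::real_vector) \<Rightarrow> 'a \<Rightarrow> bool) \<Rightarrow> ('a \<Rightarrow> 'a \<Rightarrow> bool) \<Rightarrow> bool" where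
  "vector_ordering conv le \<longleftrightarrow>
     (\<forall>x. le x x) \<and> (\<forall>x y z. le x y \<and> le y z \<longrightarrow> le x z) \<and>
     (\<forall>x y. le x y \<and> le y x \<longrightarrow> x = y) \<and>
     (\<forall>x y z. le x y \<longrightarrow> le (x + z) (y + z)) \<and>
     (\<forall>(c::real) x y. c \<ge> 0 \<and> le x y \<longrightarrow> le (c *\<^sub>R x) (c *\<^sub>R y)) \<and>
     (\<forall>X Y x y. conv X x \<and> conv Y y \<and> (\<forall>n. le (X n) (Y n)) \<longrightarrow> le x y)"

text \<open>Solid vector space (Y, le, conv): the strict order x \<prec> y iff y - x \<in> interior K
  is derived and not needed for the statement.\<close>

definition solid_vector_space ::
  "((nat \<Rightarrow> 'a::real_vector) \<Rightarrow> 'a \<Rightarrow> bool) \<Rightarrow> ('a \<Rightarrow> 'a \<Rightarrow> bool) \<Rightarrow> bool" where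
  "solid_vector_space conv le \<longleftrightarrow> vs_convergence conv \<and> vector_ordering conv le \<and>
     solid_cone conv {x. le 0 x}"

end

theory Submission
  imports Defs
begin

text \<open>Uniqueness of limits is antisymmetry plus closedness of the order (V3) applied to the
  constant pair of sequences. For boundedness, fix an interior point \<open>e\<close> of the positive cone.
  Since \<open>e - z/n \<rightarrow> e\<close>, eventually \<open>e - z/n \<succeq> 0\<close>, so every \<open>z\<close> lies below some multiple of \<open>e\<close>.
  If \<open>x\<^sub>n \<rightarrow> x\<close> then \<open>e + x - x\<^sub>n \<rightarrow> e\<close>, so eventually \<open>x\<^sub>n \<preceq> e + x\<close>; the finitely many remaining
  terms are dominated by a common multiple of \<open>e\<close>. Lower bounds follow by passing to \<open>-x\<^sub>n\<close>.\<close>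

lemma vs_convergence_add:
  "vs_convergence conv \<Longrightarrow> conv X x \<Longrightarrow> conv Y y \<Longrightarrow> conv (\<lambda>n. X n + Y n) (x + y)"
  unfolding vs_convergence_def by blast

lemma vs_convergence_scaleR:
  "vs_convergence conv \<Longrightarrow> conv X x \<Longrightarrow> conv (\<lambda>n. c *\<^sub>R X n) (c *\<^sub>R x)"
  unfolding vs_convergence_def by blast

lemma vs_convergence_scaleR_left:
  "vs_convergence conv \<Longrightarrow> L \<longlonglongrightarrow> l \<Longrightarrow> conv (\<lambda>n. L n *\<^sub>R x) (l *\<^sub>R x)"
  unfolding vs_convergence_def by blast

lemma vs_convergence_const:
  assumes "vs_convergence conv"
  shows "conv (\<lambda>n. c) c"
  using vs_convergence_scaleR_left[OF assms tendsto_const, of 1 c] by simp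

lemma vs_convergence_const_diff:
  assumes conv: "vs_convergence conv" and "conv X x"
  shows "conv (\<lambda>n. c - X n) (c - x)"
  using vs_convergence_add[OF conv vs_convergence_const[OF conv]
      vs_convergence_scaleR[OF conv \<open>conv X x\<close>, of "-1"], of c]
  by simp

lemma vs_convergence_diff_inverse_Suc:
  assumes conv: "vs_convergence conv"
  shows "conv (\<lambda>n. e - inverse (real (Suc n)) *\<^sub>R z) e"
  using vs_convergence_const_diff[OF conv
      vs_convergence_scaleR_left[OF conv LIMSEQ_inverse_real_of_nat, of z], of e]
  by simp

lemma vector_ordering_trans: "vector_ordering conv le \<Longrightarrow> le x y \<Longrightarrow> le y z \<Longrightarrow> le x z"
  unfolding vector_ordering_def by blast

lemma vector_ordering_scaleR:
  "vector_ordering conv le \<Longrightarrow> 0 \<le> c \<Longrightarrow> le x y \<Longrightarrow> le (c *\<^sub>R x) (c *\<^sub>R y)"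
  unfolding vector_ordering_def by blast

lemma vector_ordering_add_right:
  "vector_ordering conv le \<Longrightarrow> le x y \<Longrightarrow> le (x + z) (y + z)"
  unfolding vector_ordering_def by blast

lemma vector_ordering_nonneg_diff_iff:
  assumes "vector_ordering conv le"
  shows "le 0 (y - x) \<longleftrightarrow> le x y"
  using vector_ordering_add_right[OF assms, of 0 "y - x" x]
    vector_ordering_add_right[OF assms, of x y "- x"]
  by auto

lemma vector_ordering_uminus_le:
  assumes "vector_ordering conv le" and "le (- x) y"
  shows "le (- y) x"
proof -
  have "le 0 (y - - x)"
    using assms(2) by (simp only: vector_ordering_nonneg_diff_iff[OF assms(1)])
  then have "le 0 (x - - y)"
    by (simp add: add.commute)
  then show ?thesis
    by (simp only: vector_ordering_nonneg_diff_iff[OF assms(1)])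
qed

lemma vector_ordering_scaleR_mono:
  assumes ord: "vector_ordering conv le" and "le 0 e" and "c \<le> c'"
  shows "le (c *\<^sub>R e) (c' *\<^sub>R e)"
proof -
  have "le ((c' - c) *\<^sub>R 0) ((c' - c) *\<^sub>R e)"
    using vector_ordering_scaleR[OF ord _ \<open>le 0 e\<close>] \<open>c \<le> c'\<close> by simp
  then have "le 0 (c' *\<^sub>R e - c *\<^sub>R e)"
    by (simp add: scaleR_diff_left)
  then show ?thesis
    by (simp only: vector_ordering_nonneg_diff_iff[OF ord])
qed

lemma vector_ordering_limit_unique:
  assumes ord: "vector_ordering conv le" and "conv X x" and "conv X y"
  shows "x = y"
proof -
  have le_lim: "\<And>X Y x y. conv X x \<Longrightarrow> conv Y y \<Longrightarrow> (\<forall>n. le (X n) (Y n)) \<Longrightarrow> le x y"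
    and refl: "\<And>x. le x x" and antisym: "\<And>x y. le x y \<Longrightarrow> le y x \<Longrightarrow> x = y"
    using ord unfolding vector_ordering_def by blast+
  show ?thesis
    using le_lim[OF assms(2,3)] le_lim[OF assms(3,2)] refl antisym by blast
qed

lemma conv_interior_eventually:
  assumes "e \<in> conv_interior conv A" and "conv X e"
  shows "eventually (\<lambda>n. X n \<in> A) sequentially"
proof -
  obtain U where "U \<subseteq> A" "conv_open conv U" "e \<in> U"
    using assms(1) unfolding conv_interior_def by blast
  then have "finite {n. X n \<notin> U}"
    using assms(2) unfolding conv_open_def by blast
  then have "eventually (\<lambda>n. X n \<in> U) sequentially"
    by (simp add: eventually_cofinite flip: cofinite_eq_sequentially)
  then show ?thesis
    by eventually_elim (use \<open>U \<subseteq> A\<close> in blast)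
qed

lemma conv_interior_nonneg_dominates:
  assumes conv: "vs_convergence conv" and ord: "vector_ordering conv le"
    and e: "e \<in> conv_interior conv {x. le 0 x}"
  shows "\<exists>m. le z (m *\<^sub>R e)"
proof -
  obtain N where "le 0 (e - inverse (real (Suc N)) *\<^sub>R z)"
    using conv_interior_eventually[OF e vs_convergence_diff_inverse_Suc[OF conv]]
    by (auto simp: eventually_sequentially)
  from vector_ordering_scaleR[OF ord _ this, of "real (Suc N)"]
  have "le 0 (real (Suc N) *\<^sub>R e - z)"
    by (simp add: scaleR_diff_right del: of_nat_Suc)
  then show ?thesis
    by (auto simp: vector_ordering_nonneg_diff_iff[OF ord])
qed

lemma finite_dominated_by_multiple:
  assumes ord: "vector_ordering conv le" and "le 0 e"
    and dominates: "\<And>z. \<exists>m. le z (m *\<^sub>R e)" and "finite S"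
  shows "\<exists>M. \<forall>z\<in>S. le z (M *\<^sub>R e)"
proof -
  obtain m where m: "\<And>z. le z (m z *\<^sub>R e)"
    using dominates by metis
  have "le z (Max (m ` S) *\<^sub>R e)" if "z \<in> S" for z
  proof -
    have "m z \<le> Max (m ` S)"
      using \<open>finite S\<close> that by simp
    then show ?thesis
      using vector_ordering_trans[OF ord m vector_ordering_scaleR_mono[OF ord \<open>le 0 e\<close>]]
      by blast
  qed
  then show ?thesis by blast
qed

lemma eventually_bounded_above_imp_bounded_above:
  assumes ord: "vector_ordering conv le" and "le 0 e"
    and dominates: "\<And>z. \<exists>m. le z (m *\<^sub>R e)"
    and ev: "eventually (\<lambda>n. le (X n) b) sequentially"
  shows "\<exists>M. \<forall>n. le (X n) (M *\<^sub>R e)"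
proof -
  obtain N where N: "\<And>n. n \<ge> N \<Longrightarrow> le (X n) b"
    using ev by (auto simp: eventually_sequentially)
  obtain M where M: "\<forall>z\<in>insert b (X ` {..<N}). le z (M *\<^sub>R e)"
    using finite_dominated_by_multiple[OF ord \<open>le 0 e\<close> dominates] by blast
  have "le (X n) (M *\<^sub>R e)" for n
  proof (cases "n < N")
    case False
    then show ?thesis
      using vector_ordering_trans[OF ord N] M by simp
  qed (use M in simp)
  then show ?thesis by blast
qed

lemma convergent_bounded_above:
  assumes conv: "vs_convergence conv" and ord: "vector_ordering conv le"
    and e: "e \<in> conv_interior conv {x. le 0 x}" and "conv X x"
  shows "\<exists>M. \<forall>n. le (X n) (M *\<^sub>R e)"
proof (rule eventually_bounded_above_imp_bounded_above[OF ord])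
  show "le 0 e"
    using e unfolding conv_interior_def by blast
  show "\<exists>m. le z (m *\<^sub>R e)" for z
    using conv_interior_nonneg_dominates[OF conv ord e] .
  have "conv (\<lambda>n. (e + x) - X n) e"
    using vs_convergence_const_diff[OF conv \<open>conv X x\<close>, of "e + x"] by simp
  from conv_interior_eventually[OF e this]
  show "eventually (\<lambda>n. le (X n) (e + x)) sequentially"
    by (simp add: vector_ordering_nonneg_diff_iff[OF ord])
qed

theorem theorem6p6:
  fixes conv :: "(nat \<Rightarrow> 'a::real_vector) \<Rightarrow> 'a \<Rightarrow> bool"
    and le :: "'a \<Rightarrow> 'a \<Rightarrow> bool"
  assumes "solid_vector_space conv le"
  shows "(\<forall>X x y. conv X x \<and> conv X y \<longrightarrow> x = y) \<and>
         (\<forall>X x. conv X x \<longrightarrow> (\<exists>a b. \<forall>n. le a (X n) \<and> le (X n) b))"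
proof -
  have conv: "vs_convergence conv" and ord: "vector_ordering conv le"
    and "conv_interior conv {x. le 0 x} \<noteq> {}"
    using assms unfolding solid_vector_space_def solid_cone_def by auto
  then obtain e where e: "e \<in> conv_interior conv {x. le 0 x}" by blast
  have "\<exists>a b. \<forall>n. le a (X n) \<and> le (X n) b" if "conv X x" for X x
  proof -
    obtain M where "\<forall>n. le (X n) (M *\<^sub>R e)"
      using convergent_bounded_above[OF conv ord e \<open>conv X x\<close>] by blast
    moreover obtain M' where "\<forall>n. le (- X n) (M' *\<^sub>R e)"
      using convergent_bounded_above[OF conv ord e vs_convergence_scaleR[OF conv \<open>conv X x\<close>, of "-1"]]
      by auto
    ultimately show ?thesis
      using vector_ordering_uminus_le[OF ord] by blast
  qed
  then show ?thesis
    using vector_ordering_limit_unique[OF ord] by blast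
qed

end
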